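(* For all integers $n,m\ge1$, $$\beta(n)\beta(m)=\sum_{d\mid\gcd(n,m)}\beta(nm/d^2)\,d\,\lambda(d),\qquad \beta(nm)=\sum_{d\mid\gcd(n,m)}\beta(n/d)\beta(m/d)\,d\,\mu^2(d).$$ Consequently $\beta(nm)\ge\beta(n)\beta(m)$ for all $n,m\ge1$.
   Context: $\lambda$ is the Liouville function, $\mu$ the Möbius function, and $\beta(n)=\sum_{d\mid n}d\,\lambda(n/d)$. *)

theory Defs
  imports "HOL-Computational_Algebra.Computational_Algebra"
begin

definition liouville :: "nat \<Rightarrow> int" where
  "liouville n = (-1) ^ size (prime_factorization n)"

definition moebius :: "nat \<Rightarrow> int" where
  "moebius n = (if squarefree n then (-1) ^ card (prime_factors n) else 0)"

definition beta :: "nat \<Rightarrow> int" where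
  "beta n = (\<Sum>d | d dvd n. int d * liouville (n div d))"

end

theory Submission
  imports Defs
begin

(* Both identities are "multiplicative in the pair (n, m)": if n1*m1 and n2*m2
   are coprime, then the divisors of gcd (n1*n2) (m1*m2) are exactly the products x*y of a
   divisor x of gcd n1 m1 and a divisor y of gcd n2 m2, and every factor in the summands
   (beta, liouville, the square of moebius, the identity) splits multiplicatively.  Hence each
   identity reduces, by an induction over the prime-power decomposition of (n, m), to the case
   n = p^a, m = p^b.  There beta has the closed form (p+1) beta(p^k) = p^(k+1) + (-1)^k, which
   yields the three-term recursion
       beta(p^(a+1)) beta(p^(b+1)) = beta(p^(a+b+2)) - p beta(p^a) beta(p^b),
   and both prime-power identities follow from it.  The inequality beta(nm) >= beta(n) beta(m)
   is read off from the second identity: its d = 1 term is beta(n) beta(m), and all other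
   terms are nonnegative because beta is nonnegative (again by the closed form). *)

section \<open>Divisors of coprime products and of prime powers\<close>

lemma gcd_product_of_divisors:
  fixes a b x y :: nat
  assumes "coprime a b" "x dvd a" "y dvd b"
  shows "gcd (x * y) a = x"
  by (metis assms coprime_divisors gcd_mult_left_right_cancel
      gcd_nat.orderE gcd_nat.order_iff_strict)

lemma divisor_of_coprime_product:
  fixes a b d :: nat
  assumes "coprime a b" "d dvd a * b"
  shows "gcd d a * gcd d b = d"
proof -
  obtain x y where xy: "d = x * y" "x dvd a" "y dvd b"
    using assms(2) by (rule dvd_productE)
  have "gcd d a = x"
    using gcd_product_of_divisors[OF assms(1) xy(2,3)] xy(1) by simp
  moreover have "gcd d b = y"
    using gcd_product_of_divisors[of b a y x] assms(1) xy
    by (simp add: coprime_commute mult.commute)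
  ultimately show ?thesis using xy(1) by simp
qed

lemma gcd_coprime_product:
  fixes a b d :: nat
  assumes "coprime a b"
  shows "gcd d (a * b) = gcd d a * gcd d b"
proof -
  have "gcd (gcd d (a * b)) a = gcd d a" "gcd (gcd d (a * b)) b = gcd d b"
    by (metis gcd.assoc gcd.commute gcd_nat.absorb_iff1 dvd_triv_left dvd_triv_right)+
  with divisor_of_coprime_product[OF assms, of "gcd d (a * b)"] show ?thesis by simp
qed

lemma gcd_of_coprime_pairs:
  fixes n1 n2 m1 m2 :: nat
  assumes "coprime (n1 * m1) (n2 * m2)"
  shows "gcd (n1 * n2) (m1 * m2) = gcd n1 m1 * gcd n2 m2"
proof -
  have c: "coprime n1 n2" "coprime m1 m2" "coprime n1 m2" "coprime n2 m1"
    using assms by (auto simp: coprime_commute)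
  have "gcd (n1 * n2) (m1 * m2) = gcd (m1 * m2) n1 * gcd (m1 * m2) n2"
    by (subst gcd.commute) (rule gcd_coprime_product[OF c(1)])
  also have "\<dots> = (gcd n1 m1 * gcd n1 m2) * (gcd n2 m1 * gcd n2 m2)"
    by (simp only: gcd.commute[of "m1 * m2"] gcd_coprime_product[OF c(2)])
  finally show ?thesis using c by simp
qed

lemma coprime_div_div:
  fixes a b x y :: nat
  assumes "coprime a b" "x dvd a" "y dvd b"
  shows "coprime (a div x) (b div y)"
  using assms by fastforce

lemma divisor_sum_coprime_product:
  fixes a b :: nat and F :: "nat \<Rightarrow> 'c::comm_monoid_add"
  assumes "coprime a b"
  shows "(\<Sum>d | d dvd a * b. F d) = (\<Sum>x | x dvd a. \<Sum>y | y dvd b. F (x * y))"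
proof -
  have "(\<Sum>d | d dvd a * b. F d) = (\<Sum>(x, y) \<in> {x. x dvd a} \<times> {y. y dvd b}. F (x * y))"
  proof (rule sum.reindex_bij_witness[where i="\<lambda>(x, y). x * y" and j="\<lambda>d. (gcd d a, gcd d b)"])
    fix p assume "p \<in> {x. x dvd a} \<times> {y. y dvd b}"
    then obtain x y where xy: "p = (x, y)" "x dvd a" "y dvd b" by auto
    have "gcd (x * y) a = x \<and> gcd (x * y) b = y"
      using gcd_product_of_divisors[OF assms xy(2,3)] gcd_product_of_divisors[of b a y x]
        assms xy by (simp add: coprime_commute mult.commute)
    then show "(gcd (case p of (x, y) \<Rightarrow> x * y) a, gcd (case p of (x, y) \<Rightarrow> x * y) b) = p"
      using xy by simp
    show "(case p of (x, y) \<Rightarrow> x * y) \<in> {d. d dvd a * b}"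
      using xy by (simp add: mult_dvd_mono)
  qed (use divisor_of_coprime_product[OF assms] in auto)
  also have "\<dots> = (\<Sum>x | x dvd a. \<Sum>y | y dvd b. F (x * y))"
    by (rule sum.cartesian_product[symmetric])
  finally show ?thesis .
qed

lemma divisor_sum_prime_power:
  fixes F :: "nat \<Rightarrow> 'c::comm_monoid_add"
  assumes "prime p"
  shows "(\<Sum>d | d dvd p ^ c. F d) = (\<Sum>j\<le>c. F (p ^ j))"
proof -
  have "{d. d dvd p ^ c} = (\<lambda>j. p ^ j) ` {..c}"
    using divides_primepow_nat[OF assms] by auto
  moreover have "inj_on (\<lambda>j. p ^ j) {..c}"
    using prime_gt_1_nat[OF assms] by (auto intro: inj_onI simp: power_inject_exp)
  ultimately show ?thesis by (simp add: sum.reindex)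
qed

lemma gcd_prime_powers: "gcd ((p::nat) ^ a) (p ^ b) = p ^ min a b"
  by (cases "a \<le> b") (auto simp: min_def le_imp_power_dvd gcd_nat.absorb1 gcd_nat.absorb2)

section \<open>Induction over prime-power decompositions\<close>

text \<open>The induction splits off the full power of
  one prime dividing n*m.\<close>
lemma coprime_prime_power_induct2:
  fixes P :: "nat \<Rightarrow> nat \<Rightarrow> bool" and n m :: nat
  assumes mult: "\<And>n1 m1 n2 m2. coprime (n1 * m1) (n2 * m2) \<Longrightarrow>
                   n1 > 0 \<Longrightarrow> m1 > 0 \<Longrightarrow> n2 > 0 \<Longrightarrow> m2 > 0 \<Longrightarrow>
                   P n1 m1 \<Longrightarrow> P n2 m2 \<Longrightarrow> P (n1 * n2) (m1 * m2)"
    and prime_power: "\<And>p a b. prime p \<Longrightarrow> P (p ^ a) (p ^ b)"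
  shows "n > 0 \<Longrightarrow> m > 0 \<Longrightarrow> P n m"
proof (induction "n * m" arbitrary: n m rule: less_induct)
  case less
  show ?case
  proof (cases "n * m = 1")
    case True
    then have "n = 2 ^ 0" "m = 2 ^ 0" by auto
    then show ?thesis using prime_power[of 2 0 0] by simp
  next
    case False
    then obtain p where p: "prime p" "p dvd n * m" using prime_factor_nat by blast
    have p1: "p > 1" using prime_gt_1_nat[OF p(1)] .
    obtain n' where n': "n = p ^ multiplicity p n * n'" "\<not> p dvd n'"
      using multiplicity_decompose'[of n p] less.prems p1 by auto
    obtain m' where m': "m = p ^ multiplicity p m * m'" "\<not> p dvd m'"
      using multiplicity_decompose'[of m p] less.prems p1 by auto
    define a where "a = multiplicity p n"
    define b where "b = multiplicity p m"
    have na: "n = p ^ a * n'" and mb: "m = p ^ b * m'"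
      using n' m' by (simp_all add: a_def b_def)
    have pos: "n' > 0" "m' > 0" using less.prems na mb by (auto intro!: Nat.gr0I)
    have not_dvd: "\<not> p dvd n' * m'" using n'(2) m'(2) p(1) by (simp add: prime_dvd_mult_iff)
    then have "coprime p (n' * m')" using p(1) by (rule prime_imp_coprime[rotated])
    then have cop: "coprime (p ^ a * p ^ b) (n' * m')" by (simp add: power_add[symmetric])
    have "a + b \<noteq> 0"
    proof
      assume "a + b = 0"
      then have "n * m = n' * m'" using na mb by simp
      with p(2) not_dvd show False by simp
    qed
    then have "p ^ (a + b) > 1" using p1 one_less_power[of p "a + b"] by linarith
    then have "n' * m' < n * m" using na mb pos by (simp add: power_add)
    then have "P n' m'" using less.hyps pos by simp
    with mult[OF cop] prime_power[OF p(1)] pos p1 have "P (p ^ a * n') (p ^ b * m')"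
      by simp
    then show ?thesis using na mb by simp
  qed
qed

lemma coprime_prime_power_induct [consumes 1, case_names mult prime_power]:
  fixes P :: "nat \<Rightarrow> bool"
  assumes "n > 0"
    and "\<And>n1 n2. coprime n1 n2 \<Longrightarrow> P n1 \<Longrightarrow> P n2 \<Longrightarrow> P (n1 * n2)"
    and "\<And>p a. prime p \<Longrightarrow> P (p ^ a)"
  shows "P n"
  using coprime_prime_power_induct2[where P="\<lambda>n m. P n" and m=1] assms
  by (simp add: coprime_mult_left_iff coprime_mult_right_iff)

section \<open>The arithmetic functions\<close>

lemma liouville_mult:
  "x \<noteq> 0 \<Longrightarrow> y \<noteq> 0 \<Longrightarrow> liouville (x * y) = liouville x * liouville y"
  by (simp add: liouville_def prime_factorization_mult power_add)

lemma liouville_prime_power: "prime p \<Longrightarrow> liouville (p ^ k) = (-1) ^ k"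
  by (simp add: liouville_def prime_factorization_prime_power)

lemma moebius_squared: "(moebius d)^2 = (if squarefree d then 1 else 0)"
  by (simp add: moebius_def power_even_eq[symmetric] flip: power_mult)

lemma moebius_squared_mult:
  assumes "coprime x y"
  shows "(moebius (x * y))^2 = (moebius x)^2 * (moebius y)^2"
  using squarefree_mult_coprime[OF assms] squarefree_multD[of x y]
  by (auto simp: moebius_squared)

lemma moebius_squared_prime_power:
  "prime p \<Longrightarrow> (moebius (p ^ j))^2 = (if j \<le> 1 then 1 else 0)"
  by (auto simp: moebius_squared squarefree_power_iff squarefree_prime)

lemma beta_0: "beta 0 = 0"
  by (simp add: beta_def)

lemma beta_1: "beta 1 = 1"
  by (simp add: beta_def liouville_def)

text \<open>beta is the Dirichlet convolution of two multiplicative functions, hence multiplicative.\<close>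
lemma beta_mult:
  assumes "coprime a b"
  shows "beta (a * b) = beta a * beta b"
proof (cases "a = 0 \<or> b = 0")
  case True
  then show ?thesis by (auto simp: beta_0)
next
  case False
  have "beta (a * b) =
      (\<Sum>x | x dvd a. \<Sum>y | y dvd b. int (x * y) * liouville (a * b div (x * y)))"
    unfolding beta_def by (rule divisor_sum_coprime_product[OF assms])
  also have "\<dots> = (\<Sum>x | x dvd a. \<Sum>y | y dvd b.
                    (int x * liouville (a div x)) * (int y * liouville (b div y)))"
  proof (intro sum.cong refl)
    fix x y assume x: "x \<in> {x. x dvd a}" and y: "y \<in> {y. y dvd b}"
    have "a * b div (x * y) = (a div x) * (b div y)"
      using x y by (simp add: div_mult_div_if_dvd)
    moreover have "a div x \<noteq> 0" "b div y \<noteq> 0" using x y False by (auto elim!: dvdE)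
    ultimately show "int (x * y) * liouville (a * b div (x * y)) =
        (int x * liouville (a div x)) * (int y * liouville (b div y))"
      by (simp add: liouville_mult)
  qed
  also have "\<dots> = beta a * beta b"
    unfolding beta_def by (simp add: sum_product)
  finally show ?thesis .
qed

lemma beta_prime_power:
  assumes "prime p"
  shows "beta (p ^ k) = (\<Sum>j\<le>k. int p ^ j * (-1) ^ (k - j))"
  unfolding beta_def divisor_sum_prime_power[OF assms]
proof (intro sum.cong refl)
  fix j assume "j \<in> {..k}"
  then have "p ^ k div p ^ j = p ^ (k - j)" using assms by (simp add: power_diff prime_gt_0_nat)
  then show "int (p ^ j) * liouville (p ^ k div p ^ j) = int p ^ j * (-1) ^ (k - j)"
    using assms by (simp add: liouville_prime_power)
qed

text \<open>Peeling off the top divisor: beta(p^(k+1)) = p^(k+1) - beta(p^k).\<close>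
lemma beta_prime_power_Suc:
  assumes "prime p"
  shows "beta (p ^ Suc k) = int p ^ Suc k - beta (p ^ k)"
proof -
  have "beta (p ^ Suc k) = int p ^ Suc k + (\<Sum>j\<le>k. int p ^ j * (-1) ^ (Suc k - j))"
    by (subst beta_prime_power[OF assms]) (simp add: sum.atMost_Suc)
  also have "(\<Sum>j\<le>k. int p ^ j * (-1) ^ (Suc k - j)) = - (\<Sum>j\<le>k. int p ^ j * (-1) ^ (k - j))"
    by (subst sum_negf[symmetric], intro sum.cong refl) (simp add: Suc_diff_le)
  finally show ?thesis by (simp add: beta_prime_power[OF assms])
qed

lemma beta_prime_power_closed:
  assumes "prime p"
  shows "(int p + 1) * beta (p ^ k) = int p ^ (k + 1) + (-1) ^ k"
proof (induction k)
  case 0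
  then show ?case using beta_1 by simp
next
  case (Suc k)
  then show ?case
    unfolding beta_prime_power_Suc[OF assms] by (simp add: algebra_simps)
qed

text \<open>The key recursion on prime powers, obtained by multiplying out the closed forms:
  beta(p^(a+1)) beta(p^(b+1)) = beta(p^(a+b+2)) - p beta(p^a) beta(p^b).\<close>
lemma beta_prime_power_recursion:
  assumes "prime p"
  shows "beta (p ^ (a + 1)) * beta (p ^ (b + 1)) =
         beta (p ^ (a + b + 2)) - int p * beta (p ^ a) * beta (p ^ b)"
proof -
  define q where "q = int p"
  have q: "q + 1 \<noteq> 0" by (simp add: q_def)
  have C: "\<And>k. (q + 1) * beta (p ^ k) = q ^ (k + 1) + (-1) ^ k"
    using beta_prime_power_closed[OF assms] by (simp add: q_def)
  have "(q + 1)^2 * (beta (p ^ (a + 1)) * beta (p ^ (b + 1))) =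
      ((q + 1) * beta (p ^ (a + 1))) * ((q + 1) * beta (p ^ (b + 1)))"
    by (simp add: algebra_simps power2_eq_square)
  also have "\<dots> = (q ^ (a + 1 + 1) + (-1) ^ (a + 1)) * (q ^ (b + 1 + 1) + (-1) ^ (b + 1))"
    by (simp only: C)
  also have "\<dots> = (q + 1) * (q ^ (a + b + 2 + 1) + (-1) ^ (a + b + 2))
                  - q * ((q ^ (a + 1) + (-1) ^ a) * (q ^ (b + 1) + (-1) ^ b))"
    by (simp add: algebra_simps power_add)
  also have "\<dots> = (q + 1) * ((q + 1) * beta (p ^ (a + b + 2)))
                  - q * (((q + 1) * beta (p ^ a)) * ((q + 1) * beta (p ^ b)))"
    by (simp only: C)
  also have "\<dots> = (q + 1)^2 * (beta (p ^ (a + b + 2)) - q * beta (p ^ a) * beta (p ^ b))"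
    by (simp add: algebra_simps power2_eq_square)
  finally show ?thesis using q by (simp add: q_def)
qed

text \<open>beta is nonnegative: on prime powers by the closed form, in general by multiplicativity.\<close>
lemma beta_nonneg:
  assumes "n > 0"
  shows "0 \<le> beta n"
  using assms
proof (induction n rule: coprime_prime_power_induct)
  case (mult n1 n2)
  then show ?case by (simp add: beta_mult)
next
  case (prime_power p a)
  have "int p ^ (a + 1) \<ge> 1"
    using prime_gt_0_nat[OF prime_power] by (intro one_le_power) simp
  moreover have "(-1::int) ^ a \<ge> -1" by (cases "even a") auto
  ultimately have "0 \<le> (int p + 1) * beta (p ^ a)"
    using beta_prime_power_closed[OF prime_power, of a] by linarith
  then show ?case by (simp add: zero_le_mult_iff)
qed

section \<open>Multiplicativity of sums over the divisors of gcd n m\<close>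

lemma gcd_divisor_sum_mult:
  fixes T :: "nat \<Rightarrow> nat \<Rightarrow> nat \<Rightarrow> 'c::comm_semiring_1"
  assumes cop: "coprime (n1 * m1) (n2 * m2)"
    and split: "\<And>x y. x dvd gcd n1 m1 \<Longrightarrow> y dvd gcd n2 m2 \<Longrightarrow>
                  T (n1 * n2) (m1 * m2) (x * y) = T n1 m1 x * T n2 m2 y"
  shows "(\<Sum>d | d dvd gcd (n1 * n2) (m1 * m2). T (n1 * n2) (m1 * m2) d) =
         (\<Sum>x | x dvd gcd n1 m1. T n1 m1 x) * (\<Sum>y | y dvd gcd n2 m2. T n2 m2 y)"
proof -
  have "coprime (gcd n1 m1) (gcd n2 m2)"
    by (rule coprime_divisors[OF _ _ cop]) (meson dvd_mult2 gcd_dvd1)+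
  then have "(\<Sum>d | d dvd gcd (n1 * n2) (m1 * m2). T (n1 * n2) (m1 * m2) d) =
      (\<Sum>x | x dvd gcd n1 m1. \<Sum>y | y dvd gcd n2 m2. T (n1 * n2) (m1 * m2) (x * y))"
    unfolding gcd_of_coprime_pairs[OF cop] by (rule divisor_sum_coprime_product)
  also have "\<dots> = (\<Sum>x | x dvd gcd n1 m1. \<Sum>y | y dvd gcd n2 m2. T n1 m1 x * T n2 m2 y)"
    by (intro sum.cong refl) (simp add: split)
  also have "\<dots> = (\<Sum>x | x dvd gcd n1 m1. T n1 m1 x) * (\<Sum>y | y dvd gcd n2 m2. T n2 m2 y)"
    by (simp add: sum_product)
  finally show ?thesis .
qed

section \<open>The identities for powers of a single prime\<close>

text \<open>First identity for n = p^a, m = p^b, with the divisor d = p^j of gcd n m contributing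
  beta(p^(a+b-2j)) (-p)^j; by induction on min a b using the recursion.\<close>
lemma first_identity_exponents:
  assumes "prime p"
  shows "beta (p ^ a) * beta (p ^ b) = (\<Sum>j\<le>min a b. beta (p ^ (a + b - 2 * j)) * (- int p) ^ j)"
proof (induction "min a b" arbitrary: a b)
  case 0
  then have "a = 0 \<or> b = 0" by auto
  then show ?case using beta_1 by auto
next
  case (Suc c)
  then obtain a' b' where ab: "a = Suc a'" "b = Suc b'" "c = min a' b'"
    by (cases a; cases b) auto
  have "(\<Sum>j\<le>min a b. beta (p ^ (a + b - 2 * j)) * (- int p) ^ j)
      = beta (p ^ (a + b)) + (\<Sum>j\<le>c. beta (p ^ (a + b - 2 * Suc j)) * (- int p) ^ Suc j)"
    by (simp only: Suc.hyps(2)[symmetric] sum.atMost_Suc_shift) simp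
  also have "(\<Sum>j\<le>c. beta (p ^ (a + b - 2 * Suc j)) * (- int p) ^ Suc j)
      = - int p * (\<Sum>j\<le>c. beta (p ^ (a' + b' - 2 * j)) * (- int p) ^ j)"
    by (simp add: sum_distrib_left ab algebra_simps)
  also have "(\<Sum>j\<le>c. beta (p ^ (a' + b' - 2 * j)) * (- int p) ^ j) = beta (p ^ a') * beta (p ^ b')"
    using Suc.hyps(1)[OF ab(3)] ab(3) by simp
  finally show ?case
    using beta_prime_power_recursion[OF assms, of a' b'] ab by simp
qed

lemma first_identity_prime_power:
  assumes "prime p"
  shows "beta (p ^ a) * beta (p ^ b) =
         (\<Sum>d | d dvd gcd (p ^ a) (p ^ b). beta (p ^ a * p ^ b div d^2) * int d * liouville d)"
  unfolding gcd_prime_powers divisor_sum_prime_power[OF assms] first_identity_exponents[OF assms]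
proof (intro sum.cong refl)
  fix j assume "j \<in> {..min a b}"
  then have "2 * j \<le> a + b" by auto
  have "p ^ a * p ^ b div (p ^ j)^2 = p ^ (a + b) div p ^ (2 * j)"
    by (simp only: power_add power_mult mult.commute[of 2 j])
  also have "\<dots> = p ^ (a + b - 2 * j)"
    using \<open>2 * j \<le> a + b\<close> assms by (simp add: power_diff prime_gt_0_nat)
  finally have "p ^ a * p ^ b div (p ^ j)^2 = p ^ (a + b - 2 * j)" .
  moreover have "int (p ^ j) * liouville (p ^ j) = (- int p) ^ j"
    unfolding liouville_prime_power[OF assms] power_minus[of "int p"] by simp
  ultimately show "beta (p ^ (a + b - 2 * j)) * (- int p) ^ j =
      beta (p ^ a * p ^ b div (p ^ j)^2) * int (p ^ j) * liouville (p ^ j)"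
    by (simp add: mult.assoc)
qed

text \<open>Second identity for n = p^a, m = p^b: only d = 1 and d = p are squarefree, and the
  identity is the recursion read backwards.\<close>
lemma second_identity_prime_power:
  assumes "prime p"
  shows "beta (p ^ a * p ^ b) = (\<Sum>d | d dvd gcd (p ^ a) (p ^ b).
           beta (p ^ a div d) * beta (p ^ b div d) * int d * (moebius d)^2)"
proof (cases "min a b = 0")
  case True
  then have "a = 0 \<or> b = 0" by auto
  then show ?thesis using beta_1 by (auto simp: moebius_squared)
next
  case False
  then obtain a' b' where ab: "a = Suc a'" "b = Suc b'" by (cases a; cases b) auto
  let ?f = "\<lambda>j. beta (p ^ a div p ^ j) * beta (p ^ b div p ^ j) * int (p ^ j) * (moebius (p ^ j))^2"
  have "(\<Sum>j\<le>min a b. ?f j) = (\<Sum>j\<in>{0, 1}. ?f j)"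
    by (rule sum.mono_neutral_right)
      (use False in \<open>auto simp: moebius_squared_prime_power[OF assms]\<close>)
  also have "\<dots> = beta (p ^ a) * beta (p ^ b) + int p * beta (p ^ a') * beta (p ^ b')"
    using ab assms by (simp add: moebius_squared_prime_power[OF assms] prime_gt_0_nat)
  also have "\<dots> = beta (p ^ a * p ^ b)"
    using beta_prime_power_recursion[OF assms, of a' b'] ab by (simp add: power_add ac_simps)
  finally show ?thesis
    unfolding gcd_prime_powers divisor_sum_prime_power[OF assms] by simp
qed

text \<open>beta(n) beta(m) = sum over d | gcd n m of beta(nm/d^2) d lambda(d): both sides are
  multiplicative in the pair (n, m) and agree on pairs of prime powers.\<close>
theorem first_identity:
  fixes n m :: nat
  assumes "n > 0" "m > 0"
  shows "beta n * beta m = (\<Sum>d | d dvd gcd n m. beta (n * m div d^2) * int d * liouville d)"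
proof (rule coprime_prime_power_induct2[OF _ _ assms])
  fix n1 m1 n2 m2 :: nat
  assume cop: "coprime (n1 * m1) (n2 * m2)" and pos: "n1 > 0" "m1 > 0" "n2 > 0" "m2 > 0"
    and IH: "beta n1 * beta m1 = (\<Sum>d | d dvd gcd n1 m1. beta (n1 * m1 div d^2) * int d * liouville d)"
            "beta n2 * beta m2 = (\<Sum>d | d dvd gcd n2 m2. beta (n2 * m2 div d^2) * int d * liouville d)"
  have "(\<Sum>d | d dvd gcd (n1 * n2) (m1 * m2). beta (n1 * n2 * (m1 * m2) div d^2) * int d * liouville d)
      = (beta n1 * beta m1) * (beta n2 * beta m2)"
    unfolding IH
  proof (rule gcd_divisor_sum_mult[OF cop, where T="\<lambda>n m d. beta (n * m div d^2) * int d * liouville d"])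
    fix x y assume x: "x dvd gcd n1 m1" and y: "y dvd gcd n2 m2"
    have x2: "x^2 dvd n1 * m1" and y2: "y^2 dvd n2 * m2"
      using x y by (simp_all add: power2_eq_square mult_dvd_mono)
    have "n1 * n2 * (m1 * m2) div (x * y)^2 = (n1 * m1) * (n2 * m2) div (x^2 * y^2)"
      by (simp only: power_mult_distrib ac_simps)
    also have "\<dots> = (n1 * m1 div x^2) * (n2 * m2 div y^2)"
      by (rule div_mult_div_if_dvd[OF x2 y2, symmetric])
    finally have split: "n1 * n2 * (m1 * m2) div (x * y)^2 = (n1 * m1 div x^2) * (n2 * m2 div y^2)" .
    have "x \<noteq> 0" "y \<noteq> 0" using x y pos by auto
    with split show "beta (n1 * n2 * (m1 * m2) div (x * y)^2) * int (x * y) * liouville (x * y) =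
        beta (n1 * m1 div x^2) * int x * liouville x * (beta (n2 * m2 div y^2) * int y * liouville y)"
      by (simp add: beta_mult[OF coprime_div_div[OF cop x2 y2]] liouville_mult)
  qed
  also have "\<dots> = beta (n1 * n2) * beta (m1 * m2)"
    using cop by (simp add: beta_mult)
  finally show "beta (n1 * n2) * beta (m1 * m2) =
      (\<Sum>d | d dvd gcd (n1 * n2) (m1 * m2). beta (n1 * n2 * (m1 * m2) div d^2) * int d * liouville d)"
    by simp
qed (rule first_identity_prime_power)

theorem second_identity:
  fixes n m :: nat
  assumes "n > 0" "m > 0"
  shows "beta (n * m) = (\<Sum>d | d dvd gcd n m. beta (n div d) * beta (m div d) * int d * (moebius d)^2)"
proof (rule coprime_prime_power_induct2[OF _ _ assms])
  fix n1 m1 n2 m2 :: nat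
  assume cop: "coprime (n1 * m1) (n2 * m2)"
    and IH: "beta (n1 * m1) = (\<Sum>d | d dvd gcd n1 m1. beta (n1 div d) * beta (m1 div d) * int d * (moebius d)^2)"
            "beta (n2 * m2) = (\<Sum>d | d dvd gcd n2 m2. beta (n2 div d) * beta (m2 div d) * int d * (moebius d)^2)"
  have c12: "coprime n1 n2" "coprime m1 m2" using cop by auto
  have "(\<Sum>d | d dvd gcd (n1 * n2) (m1 * m2). beta (n1 * n2 div d) * beta (m1 * m2 div d) * int d * (moebius d)^2)
      = beta (n1 * m1) * beta (n2 * m2)"
    unfolding IH
  proof (rule gcd_divisor_sum_mult[OF cop,
        where T="\<lambda>n m d. beta (n div d) * beta (m div d) * int d * (moebius d)^2"])
    fix x y assume x: "x dvd gcd n1 m1" and y: "y dvd gcd n2 m2"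
    then have xd: "x dvd n1" "x dvd m1" and yd: "y dvd n2" "y dvd m2" by auto
    have "coprime x y"
      using x y cop by (meson coprime_divisors dvd_mult2 dvd_trans gcd_dvd1)
    then show "beta (n1 * n2 div (x * y)) * beta (m1 * m2 div (x * y)) * int (x * y) * (moebius (x * y))^2 =
        beta (n1 div x) * beta (m1 div x) * int x * (moebius x)^2 *
        (beta (n2 div y) * beta (m2 div y) * int y * (moebius y)^2)"
      by (simp add: div_mult_div_if_dvd[OF xd(1) yd(1), symmetric]
          div_mult_div_if_dvd[OF xd(2) yd(2), symmetric] moebius_squared_mult
          beta_mult[OF coprime_div_div[OF c12(1) xd(1) yd(1)]]
          beta_mult[OF coprime_div_div[OF c12(2) xd(2) yd(2)]] ac_simps)
  qed
  also have "\<dots> = beta (n1 * n2 * (m1 * m2))"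
    using beta_mult[OF cop] by (simp add: ac_simps)
  finally show "beta (n1 * n2 * (m1 * m2)) = (\<Sum>d | d dvd gcd (n1 * n2) (m1 * m2).
      beta (n1 * n2 div d) * beta (m1 * m2 div d) * int d * (moebius d)^2)"
    by simp
qed (rule second_identity_prime_power)

text \<open>Supermultiplicativity: the d = 1 term of the second identity is beta n * beta m and all
  other terms are nonnegative.\<close>
corollary beta_supermultiplicative:
  fixes n m :: nat
  assumes "n > 0" "m > 0"
  shows "beta n * beta m \<le> beta (n * m)"
proof -
  let ?f = "\<lambda>d. beta (n div d) * beta (m div d) * int d * (moebius d)^2"
  have "?f 1 \<le> (\<Sum>d | d dvd gcd n m. ?f d)"
  proof (rule member_le_sum)
    fix d assume "d \<in> {d. d dvd gcd n m} - {1}"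
    then have "d dvd n" "d dvd m" by auto
    with assms have "n div d > 0" "m div d > 0"
      by (auto simp: dvd_div_eq_0_iff dvd_imp_le intro!: Nat.gr0I elim!: dvdE)
    then show "0 \<le> ?f d" using beta_nonneg by simp
  qed (use assms in auto)
  moreover have "(moebius 1)^2 = 1" by (simp add: moebius_def)
  then have "?f 1 = beta n * beta m" by simp
  ultimately show ?thesis using second_identity[OF assms] by linarith
qed

theorem mainTheorem12:
  fixes n m :: nat
  assumes "n \<ge> 1" and "m \<ge> 1"
  shows "beta n * beta m =
           (\<Sum>d | d dvd gcd n m. beta (n * m div d^2) * int d * liouville d)
       \<and> beta (n * m) =
           (\<Sum>d | d dvd gcd n m. beta (n div d) * beta (m div d) * int d * (moebius d)^2)
       \<and> beta (n * m) \<ge> beta n * beta m"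
proof -
  have "n > 0" "m > 0" using assms by auto
  then show ?thesis
    using first_identity second_identity beta_supermultiplicative by blast
qed

end
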